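(* Let $S$ be a free numerical semigroup that is reflective (allowing $S=\mathbb{N}_0$). Then $S=\langle A\rangle$ for a minimal telescopic set $A$ equal to one of: (1) $A=\{1\}$ (genus $0$); (2) $A=\{2,4n+3\}$ for some $n\in\mathbb{N}_0$ (genus $2n+1$); (3) $A=\{3,3n+2\}$ for some $n\in\mathbb{N}_0$ (genus $3n+1$); (4) $A=\{4,4n+2,4n+3\}$ for some $n\in\mathbb{N}_0$ (genus $4n+1$).
   Context: A numerical semigroup is a submonoid $S$ of $(\mathbb{N}_0,+)$ with finite complement; its genus is the number of elements of $\mathbb{N}_0\setminus S$. For a sequence $A=(a_1,\dots,a_k)$ of non-negative integers, let $d_i=\gcd(a_1,\dots,a_i)$, $S_i=\langle a_1,\dots,a_i\rangle$ (the set of $\mathbb{N}_0$-linear combinations), and $c_j=d_{j-1}/d_j$ for $j\ge2$; $A$ is telescopic if $c_ja_j\in S_{j-1}$ for all $j\in\{2,\dots,k\}$. A set is telescopic if it can be ordered into a telescopic sequence. $S$ is free if $S=\langle A\rangle$ for some telescopic set $A$. A numerical semigroup $S$ of genus $g\ge1$ is called reflective if for every $z\in\{0,1,\dots,g-1\}$ exactly one of $z$ and $z+g$ belongs to $S$; $\mathbb{N}_0$ is also considered reflective. *)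

theory Defs
  imports Main
begin

inductive_set gen :: "nat set \<Rightarrow> nat set" for A :: "nat set" where
  gen_zero: "0 \<in> gen A"
| gen_add: "a \<in> A \<Longrightarrow> x \<in> gen A \<Longrightarrow> a + x \<in> gen A"

definition numerical_semigroup :: "nat set \<Rightarrow> bool" where
  "numerical_semigroup S \<longleftrightarrow>
     0 \<in> S \<and> (\<forall>x\<in>S. \<forall>y\<in>S. x + y \<in> S) \<and> finite (UNIV - S)"

definition genus :: "nat set \<Rightarrow> nat" where
  "genus S = card (UNIV - S)"

text \<open>For a sequence as = (a_1,...,a_k) (0-indexed list), d_i = gcd(a_1..a_i),
  S_i = <a_1..a_i>, c_j = d_{j-1} div d_j; telescopic iff c_j a_j \<in> S_{j-1} for 2 \<le> j \<le> k.\<close>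
definition seq_gcd :: "nat list \<Rightarrow> nat \<Rightarrow> nat" where
  "seq_gcd as i = Gcd (set (take i as))"

definition telescopic_seq :: "nat list \<Rightarrow> bool" where
  "telescopic_seq as \<longleftrightarrow>
     (\<forall>j. 2 \<le> j \<and> j \<le> length as \<longrightarrow>
        (seq_gcd as (j - 1) div seq_gcd as j) * (as ! (j - 1)) \<in> gen (set (take (j - 1) as)))"

definition telescopic_set :: "nat set \<Rightarrow> bool" where
  "telescopic_set A \<longleftrightarrow> (\<exists>as. distinct as \<and> set as = A \<and> telescopic_seq as)"

definition free_semigroup :: "nat set \<Rightarrow> bool" where
  "free_semigroup S \<longleftrightarrow> (\<exists>A. telescopic_set A \<and> S = gen A)"

definition reflective :: "nat set \<Rightarrow> bool" where
  "reflective S \<longleftrightarrow> S = UNIV \<or>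
     (genus S \<ge> 1 \<and> (\<forall>z < genus S. (z \<in> S) \<noteq> (z + genus S \<in> S)))"

definition minimal_generating_set :: "nat set \<Rightarrow> nat set \<Rightarrow> bool" where
  "minimal_generating_set A S \<longleftrightarrow> gen A = S \<and> (\<forall>B. B \<subset> A \<longrightarrow> gen B \<noteq> S)"

end

theory Submission
  imports Defs
begin

text \<open>In a reflective numerical semigroup S of genus g every gap lies below 2g, and the elements
  of S below g are exactly the multiples of the multiplicity m, so S is determined by m and g.
  Freeness provides a generator a and a modulus d \<ge> 2 coprime to a dividing all other generators;
  hence an element of S not divisible by d stays in S after subtracting a. Applying this to
  elements y + a \<in> S with y a gap forces either g = 1 or m \<le> 4 with m | g - 1, and the
  semigroups so determined are exactly those generated by the four listed families.\<close>

section \<open>Generated submonoids\<close>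

lemma gen_add_closed: "x \<in> gen A \<Longrightarrow> y \<in> gen A \<Longrightarrow> x + y \<in> gen A"
  by (induction x rule: gen.induct) (auto simp: add.assoc intro: gen.gen_add)

lemma gen_generator: "a \<in> A \<Longrightarrow> a \<in> gen A"
  using gen.gen_add[of a A 0] gen.gen_zero by simp

lemma gen_mult: "a \<in> A \<Longrightarrow> k * a \<in> gen A"
  by (induction k) (auto intro: gen.intros simp: add.commute)

lemma gen_mult_add: "a \<in> A \<Longrightarrow> y \<in> gen A \<Longrightarrow> k * a + y \<in> gen A"
  by (intro gen_add_closed gen_mult)

lemma gen_mono: "A \<subseteq> B \<Longrightarrow> gen A \<subseteq> gen B"
proof
  fix x assume "A \<subseteq> B" "x \<in> gen A"
  from this(2) show "x \<in> gen B"
    by (induction x rule: gen.induct) (use \<open>A \<subseteq> B\<close> in \<open>auto intro: gen.intros\<close>)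
qed

lemma gen_common_divisor:
  assumes "\<And>a. a \<in> A \<Longrightarrow> d dvd a" "x \<in> gen A" shows "d dvd x"
  using assms(2) by (induction x rule: gen.induct) (use assms(1) in auto)

lemma gen_zero_or_ge:
  assumes "\<And>a. a \<in> A \<Longrightarrow> c \<le> a" "x \<in> gen A" shows "x = 0 \<or> c \<le> x"
  using assms(2) by (induction x rule: gen.induct) (use assms(1) in auto)

lemma gen_insert_redundant:
  assumes "x \<in> gen A" shows "gen (insert x A) = gen A"
proof
  show "gen (insert x A) \<subseteq> gen A"
  proof
    fix y assume "y \<in> gen (insert x A)"
    then show "y \<in> gen A"
      by (induction y rule: gen.induct) (auto intro: gen.intros gen_add_closed assms)
  qed
qed (rule gen_mono, auto)

lemma gen_insert_descent:
  assumes "\<And>b. b \<in> B \<Longrightarrow> d dvd b" "x \<in> gen (insert a B)" "\<not> d dvd x"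
  shows "a \<le> x \<and> x - a \<in> gen (insert a B)"
  using assms(2,3)
proof (induction x rule: gen.induct)
  case (gen_add a' x)
  show ?case
  proof (cases "a' = a")
    case False
    with gen_add assms(1) have "d dvd a'" "a' \<in> insert a B" by auto
    with gen_add have "a \<le> x" "x - a \<in> gen (insert a B)" by (auto simp: dvd_add_right_iff)
    with \<open>a' \<in> insert a B\<close> have "a' + (x - a) \<in> gen (insert a B)" by (blast intro: gen.gen_add)
    with \<open>a \<le> x\<close> show ?thesis by simp
  qed (use gen_add in auto)
qed simp

section \<open>Telescopic sequences and free semigroups\<close>

lemma seq_gcd_eq_1_mono:
  assumes "j \<le> i" "seq_gcd as j = 1" shows "seq_gcd as i = 1"
proof -
  have "set (take j as) \<subseteq> set (take i as)" using assms(1) by (rule set_take_subset_set_take)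
  then have "seq_gcd as i dvd seq_gcd as j" unfolding seq_gcd_def by (meson Gcd_dvd Gcd_greatest subsetD)
  with assms(2) show ?thesis by simp
qed

text \<open>Once the partial gcd reaches 1 the remaining factors c_i are 1, so every later element
  already lies in the semigroup generated by its predecessors.\<close>
lemma telescopic_seq_gen_take:
  assumes tel: "telescopic_seq as" and "seq_gcd as j = 1" "1 \<le> j" "j \<le> i" "i \<le> length as"
  shows "gen (set (take i as)) = gen (set (take j as))"
  using assms(4,5)
proof (induction i rule: dec_induct)
  case (step i)
  have "seq_gcd as i = 1" "seq_gcd as (Suc i) = 1"
    using seq_gcd_eq_1_mono[OF _ \<open>seq_gcd as j = 1\<close>] step.hyps(1) by auto
  moreover have "2 \<le> Suc i" "Suc i \<le> length as" using step \<open>1 \<le> j\<close> by auto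
  ultimately have "as ! i \<in> gen (set (take i as))"
    using tel unfolding telescopic_seq_def by fastforce
  moreover have "set (take (Suc i) as) = insert (as ! i) (set (take i as))"
    using step.prems by (simp add: take_Suc_conv_app_nth)
  ultimately show ?case using step by (simp add: gen_insert_redundant)
qed simp

lemma telescopic_seq_split:
  assumes tel: "telescopic_seq as" and gcd: "Gcd (set as) = 1" and no_one: "1 \<notin> set as"
  shows "\<exists>d a B. 2 \<le> d \<and> coprime a d \<and> (\<forall>b\<in>B. d dvd b) \<and> gen (set as) = gen (insert a B)"
proof -
  have gcd_length: "seq_gcd as (length as) = 1" using gcd unfolding seq_gcd_def by simp
  define j where "j = (LEAST j. seq_gcd as j = 1)"
  have gcd_j: "seq_gcd as j = 1" unfolding j_def by (rule LeastI[of _ "length as"]) (rule gcd_length)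
  have j_le: "j \<le> length as" unfolding j_def by (rule Least_le) (rule gcd_length)
  have "j \<noteq> 0" using gcd_j unfolding seq_gcd_def by (auto intro: Nat.gr0I)
  define d where "d = seq_gcd as (j - 1)"
  define a where "a = as ! (j - 1)"
  define B where "B = set (take (j - 1) as)"
  have "d \<noteq> 1" unfolding d_def
    using not_less_Least[of "j - 1" "\<lambda>j. seq_gcd as j = 1"] \<open>j \<noteq> 0\<close> unfolding j_def by simp
  have take_j: "set (take j as) = insert a B"
    using \<open>j \<noteq> 0\<close> j_le take_Suc_conv_app_nth[of "j - 1" as] unfolding a_def B_def by auto
  have "gcd a d = 1" using gcd_j take_j unfolding d_def B_def seq_gcd_def by simp
  moreover have "a \<in> set as" using \<open>j \<noteq> 0\<close> j_le unfolding a_def by simp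
  with no_one have "a \<noteq> 1" by auto
  ultimately have "d \<noteq> 0" by (metis gcd_0_nat)
  with \<open>d \<noteq> 1\<close> have "2 \<le> d" by simp
  moreover have "\<forall>b\<in>B. d dvd b" unfolding d_def B_def seq_gcd_def by auto
  moreover have "gen (set as) = gen (insert a B)"
    using telescopic_seq_gen_take[OF tel gcd_j _ j_le] \<open>j \<noteq> 0\<close> take_j by simp
  ultimately show ?thesis using \<open>gcd a d = 1\<close> by (auto simp: coprime_iff_gcd_eq_1)
qed

lemma numerical_semigroup_ge_mem:
  assumes "numerical_semigroup S" obtains N where "\<And>x. N \<le> x \<Longrightarrow> x \<in> S"
proof -
  have "finite (UNIV - S)" using assms unfolding numerical_semigroup_def by simp
  then obtain N where "\<And>x. x \<in> UNIV - S \<Longrightarrow> x < N" by (auto simp: finite_nat_set_iff_bounded)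
  then show thesis using that by (meson DiffI UNIV_I not_le)
qed

lemma numerical_semigroup_Gcd_generators:
  assumes "numerical_semigroup (gen A)" shows "Gcd A = 1"
proof -
  obtain N where N: "\<And>x. N \<le> x \<Longrightarrow> x \<in> gen A" using numerical_semigroup_ge_mem[OF assms] by blast
  have "Gcd A dvd x" if "x \<in> gen A" for x using gen_common_divisor[OF _ that] by (simp add: Gcd_dvd)
  then have "Gcd A dvd N" "Gcd A dvd N + 1" using N by simp_all
  then have "Gcd A dvd 1" by (metis dvd_add_right_iff)
  then show ?thesis by simp
qed

lemma free_numerical_semigroup_split:
  assumes "numerical_semigroup S" "free_semigroup S" "1 \<notin> S"
  obtains d a B where "2 \<le> d" "coprime a d" "\<And>b. b \<in> B \<Longrightarrow> d dvd b" "S = gen (insert a B)"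
proof -
  obtain as where tel: "telescopic_seq as" and S: "S = gen (set as)"
    using assms(2) unfolding free_semigroup_def telescopic_set_def by blast
  have "Gcd (set as) = 1" using numerical_semigroup_Gcd_generators assms(1) S by simp
  moreover have "1 \<notin> set as" using assms(3) S gen_generator by blast
  ultimately obtain d a B where "2 \<le> d" "coprime a d" "\<forall>b\<in>B. d dvd b" "S = gen (insert a B)"
    using telescopic_seq_split[OF tel] S by auto
  then show thesis using that by blast
qed

section \<open>Reflective numerical semigroups\<close>

lemma dvd_offset: "(d::nat) dvd x \<Longrightarrow> d dvd y \<Longrightarrow> y = x + k \<Longrightarrow> d dvd k"
  by (simp add: dvd_add_right_iff)

definition reflective_set :: "nat \<Rightarrow> nat \<Rightarrow> nat set" where
  "reflective_set m g =
     {x. x < g \<and> m dvd x \<or> g \<le> x \<and> x < 2 * g \<and> \<not> m dvd x - g \<or> 2 * g \<le> x}"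

locale reflective_numerical_semigroup =
  fixes S :: "nat set" and g :: nat
  assumes numerical: "numerical_semigroup S"
    and genus_eq: "genus S = g" and genus_pos: "1 \<le> g"
    and reflection: "\<And>z. z < g \<Longrightarrow> (z \<in> S) \<noteq> (z + g \<in> S)"
begin

lemma zero_mem: "0 \<in> S"
  and add_mem: "x \<in> S \<Longrightarrow> y \<in> S \<Longrightarrow> x + y \<in> S"
  and finite_gaps: "finite (UNIV - S)"
  using numerical unfolding numerical_semigroup_def by auto

lemma mult_mem: "x \<in> S \<Longrightarrow> k * x \<in> S"
  by (induction k) (simp_all add: zero_mem add_mem)

lemma genus_not_mem: "g \<notin> S"
  using reflection[of 0] zero_mem genus_pos by simp

text \<open>Each of the g pairs {z, z + g} with z < g contains exactly one gap, and these are
  already all g gaps.\<close>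
lemma mem_if_twice_genus_le:
  assumes "2 * g \<le> x" shows "x \<in> S"
proof -
  define f where "f z = (if z \<in> S then z + g else z)" for z
  have "inj_on f {..<g}" unfolding inj_on_def f_def by simp
  moreover have "f ` {..<g} \<subseteq> (UNIV - S) \<inter> {..<2 * g}"
  proof
    fix y assume "y \<in> f ` {..<g}"
    then obtain z where "z < g" "y = f z" by blast
    then show "y \<in> (UNIV - S) \<inter> {..<2 * g}" using reflection[of z] by (auto simp: f_def)
  qed
  ultimately have "card {..<g} \<le> card ((UNIV - S) \<inter> {..<2 * g})"
    by (intro card_inj_on_le) auto
  then have "card (UNIV - S) \<le> card ((UNIV - S) \<inter> {..<2 * g})"
    using genus_eq unfolding genus_def by simp
  moreover have "card ((UNIV - S) \<inter> {..<2 * g}) \<le> card (UNIV - S)"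
    using finite_gaps by (intro card_mono) auto
  ultimately have "(UNIV - S) \<inter> {..<2 * g} = UNIV - S"
    using finite_gaps by (intro card_subset_eq) auto
  then have "UNIV - S \<subseteq> {..<2 * g}" by blast
  with assms show ?thesis by fastforce
qed

lemma mem_upper_iff:
  assumes "g \<le> x" "x < 2 * g" shows "x \<in> S \<longleftrightarrow> x - g \<notin> S"
proof -
  have "x - g < g" "x - g + g = x" using assms by simp_all
  with reflection[of "x - g"] show ?thesis by metis
qed

definition m :: nat where "m = (LEAST x. 0 < x \<and> x \<in> S)"

lemma multiplicity_pos: "0 < m" and multiplicity_mem: "m \<in> S"
proof -
  have "0 < 2 * g \<and> 2 * g \<in> S" using mem_if_twice_genus_le genus_pos by simp
  then have "0 < m \<and> m \<in> S" unfolding m_def by (rule LeastI)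
  then show "0 < m" "m \<in> S" by simp_all
qed

lemma multiplicity_le: "0 < x \<Longrightarrow> x \<in> S \<Longrightarrow> m \<le> x"
  unfolding m_def by (rule Least_le) simp

lemma not_mem_below_multiplicity: "0 < x \<Longrightarrow> x < m \<Longrightarrow> x \<notin> S"
  using multiplicity_le[of x] by linarith

lemma multiplicity_not_dvd_genus: "\<not> m dvd g"
  using mult_mem[OF multiplicity_mem] genus_not_mem by (metis dvdE mult.commute)

lemma two_le_multiplicity: "2 \<le> m"
proof -
  have "m \<noteq> 1" using multiplicity_not_dvd_genus by auto
  with multiplicity_pos show ?thesis by linarith
qed

text \<open>If x < g lies in S but x - m does not, then x - m + g \<in> S, so x + g \<in> S as well,
  contradicting reflection at x.\<close>
lemma mem_below_genus_iff:
  assumes "x < g" shows "x \<in> S \<longleftrightarrow> m dvd x"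
proof
  show "m dvd x \<Longrightarrow> x \<in> S" using mult_mem[OF multiplicity_mem] by (metis dvdE mult.commute)
  show "x \<in> S \<Longrightarrow> m dvd x" using assms
  proof (induction x rule: less_induct)
    case (less x)
    show ?case
    proof (cases "x < m")
      case True
      then have "x = 0" using not_mem_below_multiplicity[of x] less.prems(1) by (cases "x = 0") simp_all
      then show ?thesis by simp
    next
      case False
      have "x - m \<in> S"
      proof (rule ccontr)
        assume "x - m \<notin> S"
        moreover have "x - m < g" using less.prems(2) by simp
        ultimately have "x - m + g \<in> S" using reflection[of "x - m"] by blast
        then have "x - m + g + m \<in> S" using add_mem multiplicity_mem by blast
        moreover have "x - m + g + m = x + g" using False by simp
        ultimately show False using less.prems reflection[of x] by simp
      qed
      moreover have "x - m < x" "x - m < g" using False multiplicity_pos less.prems(2) by simp_all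
      ultimately have "m dvd x - m" using less.IH by blast
      then show ?thesis using False by (metis dvd_add_right_iff dvd_refl le_add_diff_inverse not_less)
    qed
  qed
qed

lemma mem_above_genus:
  assumes "g < x" "x < g + m" shows "x \<in> S"
proof (cases "x < 2 * g")
  case True
  have "x - g \<notin> S" using not_mem_below_multiplicity[of "x - g"] assms by simp
  with True assms show ?thesis using mem_upper_iff[of x] by simp
qed (simp add: mem_if_twice_genus_le)

lemma eq_reflective_set: "S = reflective_set m g"
proof (intro set_eqI)
  fix x
  consider "x < g" | "g \<le> x" "x < 2 * g" | "2 * g \<le> x" by linarith
  then show "x \<in> S \<longleftrightarrow> x \<in> reflective_set m g"
  proof cases
    case 1 then show ?thesis using mem_below_genus_iff[of x] unfolding reflective_set_def by simp
  next
    case 2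
    then have "x - g < g" by simp
    with 2 show ?thesis using mem_upper_iff[of x] mem_below_genus_iff[of "x - g"]
      unfolding reflective_set_def by simp
  next
    case 3 then show ?thesis using mem_if_twice_genus_le[of x] unfolding reflective_set_def by simp
  qed
qed

end

section \<open>Free reflective numerical semigroups\<close>

text \<open>S = gen (insert a B) where every element of B is divisible by d, as produced by
  free_numerical_semigroup_split; only the resulting descent property is retained.\<close>
locale free_reflective_numerical_semigroup = reflective_numerical_semigroup +
  fixes d a :: nat
  assumes two_le_d: "2 \<le> d" and coprime_generator: "coprime a d"
    and generator_mem: "a \<in> S"
    and descent: "\<And>s. s \<in> S \<Longrightarrow> \<not> d dvd s \<Longrightarrow> a \<le> s \<and> s - a \<in> S"
begin

lemma dvd_if_gap_shift: "y \<notin> S \<Longrightarrow> y + a \<in> S \<Longrightarrow> d dvd y + a"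
  using descent[of "y + a"] by auto

lemma multiplicity_le_generator: "m \<le> a"
proof -
  have "a \<noteq> 0" using coprime_generator two_le_d by (cases "a = 0") auto
  then show ?thesis using multiplicity_le generator_mem by simp
qed

lemma generator_ne_genus: "a \<noteq> g"
  using generator_mem genus_not_mem by auto

text \<open>If g \<ge> 2 and g \<le> m then 1 and 2 are gaps while 1 + a and 2 + a are not, so d
  divides both.\<close>
lemma genus_eq_one_if_le_multiplicity:
  assumes "g \<le> m" shows "g = 1"
proof (rule ccontr)
  assume "g \<noteq> 1"
  with genus_pos have "2 \<le> g" by simp
  have gaps: "1 \<notin> S" "2 \<notin> S"
    using not_mem_below_multiplicity[of 1] not_mem_below_multiplicity[of 2] genus_not_mem assms
      \<open>2 \<le> g\<close> by (auto simp: le_less)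
  have "g < a" using generator_ne_genus assms multiplicity_le_generator by simp
  have shifted: "y + a \<in> S" if "y \<le> 2" for y
    using mem_above_genus[of "y + a"] mem_if_twice_genus_le[of "y + a"] \<open>g < a\<close> assms that
    by (cases "y + a < g + m") simp_all
  have "d dvd 1 + a" "d dvd 2 + a"
    using dvd_if_gap_shift[OF gaps(1) shifted] dvd_if_gap_shift[OF gaps(2) shifted] by simp_all
  then have "d dvd 1" by (rule dvd_offset) simp
  with two_le_d show False by simp
qed

lemma dvd_genus_add_generator: "g < a \<Longrightarrow> d dvd g + a"
  using dvd_if_gap_shift[OF genus_not_mem] mem_if_twice_genus_le[of "g + a"] by simp

lemma multiplicity_dvd_genus_minus_one_if_large:
  assumes "g < a" shows "m dvd g - 1"
proof (rule ccontr)
  assume "\<not> m dvd g - 1"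
  then have "g - 1 \<notin> S" using mem_below_genus_iff[of "g - 1"] genus_pos by simp
  moreover have "g - 1 + a \<in> S" using mem_if_twice_genus_le assms by simp
  ultimately have "d dvd g - 1 + a" by (rule dvd_if_gap_shift)
  from this dvd_genus_add_generator[OF assms] have "d dvd 1"
    by (rule dvd_offset) (use genus_pos in arith)
  with two_le_d show False by simp
qed

lemma dvd_multiplicity_if_large:
  assumes "m < g" "g < a" shows "d dvd m"
proof -
  have "m + g \<notin> S" using reflection[OF assms(1)] multiplicity_mem by simp
  moreover have "m + g + a \<in> S" using mem_if_twice_genus_le assms by simp
  ultimately have "d dvd m + g + a" by (rule dvd_if_gap_shift)
  with dvd_genus_add_generator[OF assms(2)] show ?thesis by (rule dvd_offset) simp
qed

text \<open>For 0 < y < m with d \<not> | y + a, the gap y forces y + a to be a gap in [g, 2g), so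
  m | y + a - g. As d | a + 1, this applies to y = 2 and to y = 3 or y = 4.\<close>
lemma multiplicity_le_4_if_large:
  assumes "m < g" "g < a" shows "m \<le> 4"
proof (rule ccontr)
  assume "\<not> m \<le> 4"
  have "d dvd g - 1"
    using dvd_multiplicity_if_large[OF assms] multiplicity_dvd_genus_minus_one_if_large[OF assms(2)]
    by (rule dvd_trans)
  from this dvd_genus_add_generator[OF assms(2)] have "d dvd a + 1"
    by (rule dvd_offset) (use genus_pos in arith)
  have shift: "m dvd y + a - g" if "0 < y" "y < m" "\<not> d dvd y + a" for y
  proof -
    have "y \<notin> S" using not_mem_below_multiplicity that by simp
    then have "y + a \<notin> S" using dvd_if_gap_shift that(3) by blast
    then have "y + a < 2 * g" using mem_if_twice_genus_le[of "y + a"] by linarith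
    then have "y + a - g \<in> S" using mem_upper_iff[of "y + a"] assms(2) \<open>y + a \<notin> S\<close> by simp
    moreover have "y + a - g < g" using \<open>y + a < 2 * g\<close> by simp
    ultimately show ?thesis using mem_below_genus_iff by blast
  qed
  have "\<not> d dvd 2 + a"
  proof
    assume "d dvd 2 + a"
    with \<open>d dvd a + 1\<close> have "d dvd 1" by (rule dvd_offset) simp
    with two_le_d show False by simp
  qed
  then have two: "m dvd 2 + a - g" using shift[of 2] \<open>\<not> m \<le> 4\<close> by simp
  show False
  proof (cases "d dvd 3 + a")
    case True
    with \<open>d dvd a + 1\<close> have "d dvd 2" by (rule dvd_offset) simp
    then have "d = 2" using two_le_d dvd_imp_le[of d 2] by simp
    have "\<not> d dvd 4 + a"
    proof
      assume "d dvd 4 + a"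
      with \<open>d dvd a + 1\<close> have "d dvd 3" by (rule dvd_offset) simp
      with \<open>d = 2\<close> show False by simp
    qed
    then have "m dvd 4 + a - g" using shift[of 4] \<open>\<not> m \<le> 4\<close> by simp
    with two have "m dvd 2" by (rule dvd_offset) (use assms in arith)
    with \<open>\<not> m \<le> 4\<close> show False using dvd_imp_le[of m 2] by simp
  next
    case False
    then have "m dvd 3 + a - g" using shift[of 3] \<open>\<not> m \<le> 4\<close> by simp
    with two have "m dvd 1" by (rule dvd_offset) (use assms in arith)
    with \<open>\<not> m \<le> 4\<close> show False by simp
  qed
qed

lemma not_dvd_generator: "\<not> d dvd a"
  using coprime_generator two_le_d coprime_common_divisor_nat[of a d d] by auto

lemma generator_eq_multiplicity_if_small:
  assumes "a < g" shows "a = m"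
proof -
  have "m dvd a" using mem_below_genus_iff[OF assms] generator_mem by simp
  then have "\<not> d dvd m" using not_dvd_generator dvd_trans by blast
  then show ?thesis using descent[OF multiplicity_mem] multiplicity_le_generator by simp
qed

lemma dvd_add_multiplicity_if_small:
  assumes "a < g" "g - m < z" "z < g" "\<not> m dvd z" shows "d dvd z + m"
proof -
  have "z \<notin> S" using mem_below_genus_iff[OF assms(3)] assms(4) by simp
  moreover have "z + m \<in> S" using mem_above_genus[of "z + m"] assms(2,3) by simp
  ultimately show ?thesis using dvd_if_gap_shift generator_eq_multiplicity_if_small[OF assms(1)]
    by simp
qed

text \<open>Among g - 1, ..., g - (m - 1) no two are multiples of m, and no two consecutive ones are
  non-multiples (else d | 1); with m \<ge> 5 the numbers g - 2, g - 3, g - 4 give a contradiction,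
  and with m = 4 the non-multiples g - 1, g - 3 force d = 2 | m.\<close>
lemma multiplicity_le_3_if_small:
  assumes "m < g" "a < g" shows "m \<le> 3"
proof (rule ccontr)
  assume "\<not> m \<le> 3"
  have apart: False if "m dvd g - i" "m dvd g - j" "i < j" "j < m" for i j
  proof -
    have "m dvd j - i" using dvd_offset[OF that(2,1)] that assms(1) by simp
    then show False using that dvd_imp_le[of m "j - i"] by simp
  qed
  have non_multiple: "d dvd g - i + m" if "1 \<le> i" "i < m" "\<not> m dvd g - i" for i
    using dvd_add_multiplicity_if_small[OF assms(2), of "g - i"] that assms(1) by simp
  have adjacent: "m dvd g - i \<or> m dvd g - Suc i" if "1 \<le> i" "Suc i < m" for i
  proof (rule ccontr)
    assume "\<not> (m dvd g - i \<or> m dvd g - Suc i)"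
    then have "d dvd g - Suc i + m" "d dvd g - i + m" using non_multiple that by simp_all
    then have "d dvd 1" by (rule dvd_offset) (use that assms(1) in arith)
    with two_le_d show False by simp
  qed
  have "m dvd g - 2"
    using adjacent[of 1] adjacent[of 2] apart[of 1 3] \<open>\<not> m \<le> 3\<close> by (auto simp: numeral_eq_Suc)
  then have "\<not> m dvd g - 1" "\<not> m dvd g - 3" using apart[of 1 2] apart[of 2 3] \<open>\<not> m \<le> 3\<close> by auto
  show False
  proof (cases "m = 4")
    case True
    have "d dvd g - 3 + m" "d dvd g - 1 + m"
      using non_multiple \<open>\<not> m dvd g - 1\<close> \<open>\<not> m dvd g - 3\<close> True by simp_all
    then have "d dvd 2" by (rule dvd_offset) (use True assms(1) in arith)
    then have "d dvd m" using True dvd_trans[of d 2 4] by simp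
    then show False using not_dvd_generator generator_eq_multiplicity_if_small[OF assms(2)] by simp
  next
    case False
    then show False
      using adjacent[of 3] apart[of 2 4] \<open>m dvd g - 2\<close> \<open>\<not> m dvd g - 3\<close> \<open>\<not> m \<le> 3\<close>
      by (auto simp: numeral_eq_Suc)
  qed
qed

text \<open>For m = 3 and g \<equiv> 2 (mod 3): d | (g - 1) + 3 by the gap g - 1, and d | 2g + 1 since
  otherwise 2g + 1 - 3 = (g - 2) + g \<in> S along with g - 2; hence d | 3 = m.\<close>
lemma multiplicity_dvd_genus_minus_one_if_small:
  assumes "m < g" "a < g" shows "m dvd g - 1"
proof -
  have "m = 2 \<or> m = 3"
    using multiplicity_le_3_if_small[OF assms] two_le_multiplicity by linarith
  then show ?thesis
  proof
    assume "m = 2"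
    then have "\<not> 2 dvd g" using multiplicity_not_dvd_genus by simp
    then have "2 dvd g - 1" using genus_pos by presburger
    with \<open>m = 2\<close> show ?thesis by simp
  next
    assume "m = 3"
    show ?thesis
    proof (rule ccontr)
      assume "\<not> m dvd g - 1"
      then have "\<not> 3 dvd g - 1" "\<not> 3 dvd g" using multiplicity_not_dvd_genus \<open>m = 3\<close> by simp_all
      then have "3 dvd g - 2" by presburger
      have "d dvd g - 1 + 3"
        using dvd_add_multiplicity_if_small[OF assms(2), of "g - 1"] \<open>\<not> m dvd g - 1\<close> \<open>m = 3\<close> assms(1)
        by simp
      then have "d dvd 2 * (g + 2)" using assms(1) \<open>m = 3\<close> dvd_mult[of d "g + 2" 2] by simp
      moreover have "d dvd 2 * g + 1"
      proof (rule ccontr)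
        assume "\<not> d dvd 2 * g + 1"
        then have "2 * g + 1 - a \<in> S"
          using descent[of "2 * g + 1"] mem_if_twice_genus_le[of "2 * g + 1"] by simp
        moreover have "2 * g + 1 - a = (g - 2) + g"
          using generator_eq_multiplicity_if_small[OF assms(2)] \<open>m = 3\<close> assms(1) by simp
        ultimately have "(g - 2) + g \<in> S" by simp
        moreover have "g - 2 \<in> S"
          using mem_below_genus_iff[of "g - 2"] \<open>3 dvd g - 2\<close> \<open>m = 3\<close> assms(1) by simp
        moreover have "g - 2 < g" using assms(1) by simp
        ultimately show False using reflection by blast
      qed
      ultimately have "d dvd 3" using dvd_offset[of d "2 * g + 1" "2 * (g + 2)" 3] by simp
      then have "d dvd m" using \<open>m = 3\<close> by simp
      then show False
        using not_dvd_generator generator_eq_multiplicity_if_small[OF assms(2)] by simp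
    qed
  qed
qed

lemma multiplicity_cases: "g = 1 \<or> m < g \<and> m \<le> 4 \<and> m dvd g - 1"
proof -
  consider "g \<le> m" | "m < g" "g < a" | "m < g" "a < g"
    using generator_ne_genus by (meson linorder_neqE_nat not_less)
  then show ?thesis
  proof cases
    case 1 then show ?thesis using genus_eq_one_if_le_multiplicity by simp
  next
    case 2 then show ?thesis
      using multiplicity_le_4_if_large multiplicity_dvd_genus_minus_one_if_large by simp
  next
    case 3 then show ?thesis
      using multiplicity_le_3_if_small multiplicity_dvd_genus_minus_one_if_small by simp
  qed
qed

end

lemma free_reflective_numerical_semigroup_exists:
  assumes "numerical_semigroup S" "free_semigroup S" "reflective S" "S \<noteq> UNIV"
  obtains d a where "free_reflective_numerical_semigroup S (genus S) d a"
proof -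
  interpret reflective_numerical_semigroup S "genus S"
    using assms unfolding reflective_def by unfold_locales auto
  have "1 \<notin> S" using genus_not_mem mult_mem[of 1 "genus S"] by auto
  then obtain d a B where
    "2 \<le> d" "coprime a d" and B: "\<And>b. b \<in> B \<Longrightarrow> d dvd b" and S: "S = gen (insert a B)"
    by (rule free_numerical_semigroup_split[OF assms(1,2)]) blast+
  have "free_reflective_numerical_semigroup S (genus S) d a"
  proof unfold_locales
    show "2 \<le> d" "coprime a d" by fact+
    show "a \<in> S" using S gen_generator by blast
    show "a \<le> s \<and> s - a \<in> S" if "s \<in> S" "\<not> d dvd s" for s
      using gen_insert_descent[OF B] that S by simp
  qed
  then show thesis by (rule that)
qed

section \<open>The four families\<close>

lemma reflective_set_genus_one: "reflective_set m 1 = reflective_set k 1"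
  unfolding reflective_set_def by auto

lemma reflective_set_eqI:
  assumes "\<And>x. x < g \<Longrightarrow> P x \<longleftrightarrow> m dvd x"
    and "\<And>y. y < g \<Longrightarrow> P (g + y) \<longleftrightarrow> \<not> m dvd y"
    and "\<And>x. 2 * g \<le> x \<Longrightarrow> P x"
  shows "reflective_set m g = {x. P x}"
proof (intro set_eqI)
  fix x
  consider "x < g" | "g \<le> x" "x < 2 * g" | "2 * g \<le> x" by linarith
  then show "x \<in> reflective_set m g \<longleftrightarrow> x \<in> {x. P x}"
  proof cases
    case 2
    then have "x - g < g" "x = g + (x - g)" by simp_all
    with 2 show ?thesis using assms(2)[of "x - g"] unfolding reflective_set_def by simp
  qed (use assms(1,3) in \<open>auto simp: reflective_set_def\<close>)
qed

lemma reflective_set_family_2: "reflective_set 2 (2 * n + 1) = {x. even x \<or> 4 * n + 3 \<le> x}"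
  apply (rule reflective_set_eqI)
  subgoal by auto
  subgoal by auto
  subgoal by presburger
  done

lemma reflective_set_family_3:
  "reflective_set 3 (3 * n + 1) =
     {x. x mod 3 = 0 \<or> x mod 3 = 2 \<and> 3 * n + 2 \<le> x \<or> x mod 3 = 1 \<and> 6 * n + 4 \<le> x}"
  apply (rule reflective_set_eqI)
  subgoal by (auto simp: dvd_eq_mod_eq_0)
  subgoal by (simp add: dvd_eq_mod_eq_0 mod_add_eq[symmetric] mod_Suc) (auto simp: mod_Suc)
  subgoal by presburger
  done

lemma reflective_set_family_4:
  "reflective_set 4 (4 * n + 1) =
     {x. x mod 4 = 0 \<or> x mod 4 = 2 \<and> 4 * n + 2 \<le> x \<or> x mod 4 = 3 \<and> 4 * n + 3 \<le> x
       \<or> x mod 4 = 1 \<and> 8 * n + 5 \<le> x}"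
  apply (rule reflective_set_eqI)
  subgoal by (auto simp: dvd_eq_mod_eq_0)
  subgoal by (simp add: dvd_eq_mod_eq_0 mod_add_eq[symmetric] mod_Suc) (auto simp: mod_Suc)
  subgoal by presburger
  done

lemma dvd_diff_decompose: "(k::nat) dvd x - c \<Longrightarrow> c \<le> x \<Longrightarrow> x = (x - c) div k * k + c"
  by simp

lemma gen_family_2: "gen {2, 4 * n + 3} = {x. even x \<or> 4 * n + 3 \<le> x}"
proof (intro set_eqI iffI)
  fix x assume "x \<in> gen {2, 4 * n + 3}"
  then show "x \<in> {x. even x \<or> 4 * n + 3 \<le> x}" by (induction x rule: gen.induct) auto
next
  fix x assume x: "x \<in> {x. even x \<or> 4 * n + 3 \<le> x}"
  let ?A = "{2, 4 * n + 3}"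
  show "x \<in> gen ?A"
  proof (cases "even x")
    case True
    then have "x = x div 2 * 2 + 0" by simp
    then show ?thesis using gen_mult_add[of 2 ?A 0 "x div 2"] gen.gen_zero by simp
  next
    case False
    with x have "4 * n + 3 \<le> x" by simp
    moreover from False have "2 dvd x - (4 * n + 3)" by presburger
    ultimately have "x = (x - (4 * n + 3)) div 2 * 2 + (4 * n + 3)" by (simp add: dvd_diff_decompose)
    then show ?thesis using gen_mult_add[OF _ gen_generator, of 2 ?A "4 * n + 3"]
      by (metis insertI1 insertI2 singletonI)
  qed
qed

lemma gen_family_3:
  "gen {3, 3 * n + 2} =
     {x. x mod 3 = 0 \<or> x mod 3 = 2 \<and> 3 * n + 2 \<le> x \<or> x mod 3 = 1 \<and> 6 * n + 4 \<le> x}"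
proof (intro set_eqI iffI)
  fix x assume "x \<in> gen {3, 3 * n + 2}"
  then show "x \<in> {x. x mod 3 = 0 \<or> x mod 3 = 2 \<and> 3 * n + 2 \<le> x \<or> x mod 3 = 1 \<and> 6 * n + 4 \<le> x}"
    by (induction x rule: gen.induct) (auto, presburger+)
next
  let ?A = "{3, 3 * n + 2}"
  fix x assume "x \<in> {x. x mod 3 = 0 \<or> x mod 3 = 2 \<and> 3 * n + 2 \<le> x \<or> x mod 3 = 1 \<and> 6 * n + 4 \<le> x}"
  then consider "x mod 3 = 0" | "x mod 3 = 2" "3 * n + 2 \<le> x" | "x mod 3 = 1" "6 * n + 4 \<le> x"
    by auto
  then show "x \<in> gen ?A"
  proof cases
    case 1
    then have "x = x div 3 * 3 + 0" using dvd_div_mult_self[of 3 x] by (simp add: dvd_eq_mod_eq_0)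
    then show ?thesis using gen_mult_add[of 3 ?A 0 "x div 3"] gen.gen_zero by simp
  next
    case 2
    then have "3 dvd x - (3 * n + 2)" by presburger
    with 2 have "x = (x - (3 * n + 2)) div 3 * 3 + (3 * n + 2)" by (simp add: dvd_diff_decompose)
    then show ?thesis using gen_mult_add[OF _ gen_generator, of 3 ?A "3 * n + 2"]
      by (metis insertI1 insertI2 singletonI)
  next
    case 3
    then have "3 dvd x - 2 * (3 * n + 2)" by presburger
    with 3 have "x = (x - 2 * (3 * n + 2)) div 3 * 3 + 2 * (3 * n + 2)"
      by (intro dvd_diff_decompose) simp_all
    then show ?thesis using gen_mult_add[OF _ gen_mult, of 3 ?A "3 * n + 2"]
      by (metis insertI1 insertI2 singletonI)
  qed
qed

lemma gen_family_4:
  "gen {4, 4 * n + 2, 4 * n + 3} =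
     {x. x mod 4 = 0 \<or> x mod 4 = 2 \<and> 4 * n + 2 \<le> x \<or> x mod 4 = 3 \<and> 4 * n + 3 \<le> x
       \<or> x mod 4 = 1 \<and> 8 * n + 5 \<le> x}"
proof (intro set_eqI iffI)
  fix x assume "x \<in> gen {4, 4 * n + 2, 4 * n + 3}"
  then show "x \<in> {x. x mod 4 = 0 \<or> x mod 4 = 2 \<and> 4 * n + 2 \<le> x \<or> x mod 4 = 3 \<and> 4 * n + 3 \<le> x
       \<or> x mod 4 = 1 \<and> 8 * n + 5 \<le> x}"
    by (induction x rule: gen.induct) (auto, presburger+)
next
  let ?A = "{4, 4 * n + 2, 4 * n + 3}"
  fix x assume "x \<in> {x. x mod 4 = 0 \<or> x mod 4 = 2 \<and> 4 * n + 2 \<le> x \<or> x mod 4 = 3 \<and> 4 * n + 3 \<le> x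
       \<or> x mod 4 = 1 \<and> 8 * n + 5 \<le> x}"
  then consider "x mod 4 = 0" | "x mod 4 = 2" "4 * n + 2 \<le> x" | "x mod 4 = 3" "4 * n + 3 \<le> x"
    | "x mod 4 = 1" "8 * n + 5 \<le> x"
    by auto
  then show "x \<in> gen ?A"
  proof cases
    case 1
    then have "x = x div 4 * 4 + 0" using dvd_div_mult_self[of 4 x] by (simp add: dvd_eq_mod_eq_0)
    then show ?thesis using gen_mult_add[of 4 ?A 0 "x div 4"] gen.gen_zero by simp
  next
    case 2
    then have "4 dvd x - (4 * n + 2)" by presburger
    with 2 have "x = (x - (4 * n + 2)) div 4 * 4 + (4 * n + 2)" by (simp add: dvd_diff_decompose)
    then show ?thesis
      using gen_mult_add[OF _ gen_generator, of 4 ?A "4 * n + 2"] by (metis insertI1 insertI2)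
  next
    case 3
    then have "4 dvd x - (4 * n + 3)" by presburger
    with 3 have "x = (x - (4 * n + 3)) div 4 * 4 + (4 * n + 3)" by (simp add: dvd_diff_decompose)
    then show ?thesis
      using gen_mult_add[OF _ gen_generator, of 4 ?A "4 * n + 3"]
      by (metis insertI1 insertI2 singletonI)
  next
    case 4
    then have "4 dvd x - ((4 * n + 2) + (4 * n + 3))" by presburger
    with 4 have "x = (x - ((4 * n + 2) + (4 * n + 3))) div 4 * 4 + ((4 * n + 2) + (4 * n + 3))"
      by (intro dvd_diff_decompose) simp_all
    moreover have "(4 * n + 2) + (4 * n + 3) \<in> gen ?A" by (intro gen_add_closed gen_generator) simp_all
    ultimately show ?thesis using gen_mult_add[of 4 ?A] by (metis insertI1)
  qed
qed

lemma minimal_generating_setI: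
  assumes "\<And>e. e \<in> A \<Longrightarrow> e \<notin> gen (A - {e})" shows "minimal_generating_set A (gen A)"
  unfolding minimal_generating_set_def
proof (intro conjI allI impI refl)
  fix B assume "B \<subset> A"
  then obtain e where "e \<in> A" and "B \<subseteq> A - {e}" by blast
  from this(2) have "gen B \<subseteq> gen (A - {e})" by (rule gen_mono)
  with assms[OF \<open>e \<in> A\<close>] gen_generator[OF \<open>e \<in> A\<close>] show "gen B \<noteq> gen A" by blast
qed

lemma minimal_generating_set_pair:
  assumes "0 < a" "a < b" "\<not> a dvd b" shows "minimal_generating_set {a, b} (gen {a, b})"
proof (rule minimal_generating_setI)
  fix e assume "e \<in> {a, b}"
  then consider "e = a" "{a, b} - {e} = {b}" | "e = b" "{a, b} - {e} = {a}" using assms(2) by auto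
  then show "e \<notin> gen ({a, b} - {e})"
  proof cases
    case 1 then show ?thesis using gen_zero_or_ge[of "{b}" b a] assms(1,2) by auto
  next
    case 2 then show ?thesis using gen_common_divisor[of "{a}" a b] assms(3) by auto
  qed
qed

lemma minimal_generating_set_4:
  assumes "1 \<le> n"
  shows "minimal_generating_set {4, 4 * n + 2, 4 * n + 3} (gen {4, 4 * n + 2, 4 * n + 3})"
proof (rule minimal_generating_setI)
  fix e assume "e \<in> {4, 4 * n + 2, 4 * n + 3}"
  then consider "e = 4" | "e = 4 * n + 2" | "e = 4 * n + 3" by blast
  then show "e \<notin> gen ({4, 4 * n + 2, 4 * n + 3} - {e})"
  proof cases
    case 1
    then have "{4, 4 * n + 2, 4 * n + 3} - {e} = {4 * n + 2, 4 * n + 3}" using assms by auto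
    moreover have "6 \<le> b" if "b \<in> {4 * n + 2, 4 * n + 3}" for b using that assms by auto
    ultimately show ?thesis using gen_zero_or_ge[of "{4 * n + 2, 4 * n + 3}" 6 4] 1 by auto
  next
    case 2
    then have "{4, 4 * n + 2, 4 * n + 3} - {e} = insert (4 * n + 3) {4}" using assms by auto
    moreover have "\<not> 4 dvd 4 * n + 2" by presburger
    ultimately show ?thesis using gen_insert_descent[of "{4}" 4 "4 * n + 2" "4 * n + 3"] 2 by force
  next
    case 3
    then have "{4, 4 * n + 2, 4 * n + 3} - {e} = {4, 4 * n + 2}" by auto
    moreover have "2 dvd b" if "b \<in> {4, 4 * n + 2}" for b using that by auto
    moreover have "\<not> 2 dvd 4 * n + 3" by presburger
    ultimately show ?thesis using gen_common_divisor[of "{4, 4 * n + 2}" 2 "4 * n + 3"] 3 by auto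
  qed
qed
lemma telescopic_set_pair: "coprime a b \<Longrightarrow> a \<noteq> b \<Longrightarrow> telescopic_set {a, b}"
  unfolding telescopic_set_def telescopic_seq_def seq_gcd_def
  using gen_mult[of a "{a}" b]
  by (intro exI[of _ "[a, b]"]) (auto simp: numeral_2_eq_2 le_Suc_eq mult.commute)

lemma telescopic_set_4: "telescopic_set {4, 4 * n + 2, 4 * n + 3}"
proof -
  define as where "as = [4, 4 * n + 2, 4 * n + (3::nat)]"
  have "gcd 4 (4 * n + 2) = (2::nat)" using gcd_add_mult[of 4 n 2] by (simp add: ac_simps)
  moreover have "gcd 2 (4 * n + 3) = (1::nat)" using gcd_add_mult[of 2 "2 * n" 3] by (simp add: ac_simps)
  ultimately have gcds: "seq_gcd as 1 = 4" "seq_gcd as 2 = 2" "seq_gcd as 3 = 1"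
    unfolding as_def seq_gcd_def by (simp_all add: numeral_eq_Suc gcd.assoc)
  have prefixes: "set (take 1 as) = {4}" "set (take 2 as) = {4, 4 * n + 2}"
    "as ! 1 = 4 * n + 2" "as ! 2 = 4 * n + 3"
    unfolding as_def by (simp_all add: numeral_eq_Suc)
  have "2 * (4 * n + 2) = (2 * n + 1) * 4" by simp
  with gen_mult[of 4 "{4}" "2 * n + 1"] have c2: "2 * (4 * n + 2) \<in> gen {4}" by (simp only:) simp
  have "2 * (4 * n + 3) = (n + 1) * 4 + (4 * n + 2)" by simp
  with gen_mult_add[OF _ gen_generator, of 4 "{4, 4 * n + 2}" "4 * n + 2" "n + 1"]
  have c3: "2 * (4 * n + 3) \<in> gen {4, 4 * n + 2}" by (simp only:) simp
  have "telescopic_seq as"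
    unfolding telescopic_seq_def
  proof (intro allI impI)
    fix j assume "2 \<le> j \<and> j \<le> length as"
    then have "j = 2 \<or> j = 3" unfolding as_def by auto
    then show "(seq_gcd as (j - 1) div seq_gcd as j) * (as ! (j - 1)) \<in> gen (set (take (j - 1) as))"
      using gcds prefixes c2 c3 by auto
  qed
  then show ?thesis unfolding telescopic_set_def by (intro exI[of _ as]) (auto simp: as_def)
qed

lemma telescopic_set_singleton: "telescopic_set {a}"
  unfolding telescopic_set_def telescopic_seq_def by (intro exI[of _ "[a]"]) (simp add: gen.gen_zero)

lemma minimal_generating_set_one: "minimal_generating_set {1} UNIV"
proof -
  have "gen {1} = UNIV" using gen_mult[of 1 "{1}"] by auto
  moreover have "minimal_generating_set {1} (gen {1})"
    by (rule minimal_generating_setI) (use gen_zero_or_ge[of "{}" 2 1] in auto)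
  ultimately show ?thesis by simp
qed

lemma telescopic_minimal_family_2:
  "telescopic_set {2, 4 * n + 3} \<and> minimal_generating_set {2, 4 * n + 3} (gen {2, 4 * n + 3})"
proof
  show "telescopic_set {2, 4 * n + 3}" by (rule telescopic_set_pair) auto
  show "minimal_generating_set {2, 4 * n + 3} (gen {2, 4 * n + 3})"
    by (rule minimal_generating_set_pair) presburger+
qed

lemma telescopic_minimal_family_3:
  assumes "1 \<le> n"
  shows "telescopic_set {3, 3 * n + 2} \<and> minimal_generating_set {3, 3 * n + 2} (gen {3, 3 * n + 2})"
proof
  have "coprime 3 (3 * n + 2)"
    using gcd_add_mult[of 3 n 2] coprime_Suc_right_nat[of 2]
    by (simp add: coprime_iff_gcd_eq_1 ac_simps gcd.commute)
  then show "telescopic_set {3, 3 * n + 2}" by (rule telescopic_set_pair) simp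
  show "minimal_generating_set {3, 3 * n + 2} (gen {3, 3 * n + 2})"
    by (rule minimal_generating_set_pair) (use assms in presburger)+
qed

lemma telescopic_minimal_family_4:
  assumes "1 \<le> n"
  shows "telescopic_set {4, 4 * n + 2, 4 * n + 3}
    \<and> minimal_generating_set {4, 4 * n + 2, 4 * n + 3} (gen {4, 4 * n + 2, 4 * n + 3})"
  using telescopic_set_4 minimal_generating_set_4[OF assms] by blast

context free_reflective_numerical_semigroup
begin

lemma eq_gen_family:
  "(\<exists>n. S = gen {2, 4 * n + 3} \<and> g = 2 * n + 1)
   \<or> (\<exists>n \<ge> 1. S = gen {3, 3 * n + 2} \<and> g = 3 * n + 1)
   \<or> (\<exists>n \<ge> 1. S = gen {4, 4 * n + 2, 4 * n + 3} \<and> g = 4 * n + 1)"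
proof -
  from multiplicity_cases consider "g = 1" | "m < g" "m \<le> 4" "m dvd g - 1" by blast
  then show ?thesis
  proof cases
    case 1
    then have "S = gen {2, 4 * 0 + 3}"
      using eq_reflective_set reflective_set_genus_one[of m 2] reflective_set_family_2[of 0]
        gen_family_2[of 0] by simp
    with 1 show ?thesis by (intro disjI1 exI[of _ 0]) simp
  next
    case 2
    then obtain n where n: "g = m * n + 1" using genus_pos by (metis dvdE le_add_diff_inverse2)
    with 2 multiplicity_pos have "1 \<le> n" by (cases n) simp_all
    have "m = 2 \<or> m = 3 \<or> m = 4" using 2 two_le_multiplicity by linarith
    then show ?thesis
    proof (elim disjE)
      assume "m = 2" then show ?thesis
        using eq_reflective_set n reflective_set_family_2[of n] gen_family_2[of n] by auto
    next
      assume "m = 3" then show ?thesis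
        using eq_reflective_set n reflective_set_family_3[of n] gen_family_3[of n] \<open>1 \<le> n\<close> by auto
    next
      assume "m = 4" then show ?thesis
        using eq_reflective_set n reflective_set_family_4[of n] gen_family_4[of n] \<open>1 \<le> n\<close> by auto
    qed
  qed
qed

end

theorem mainTheorem13:
  fixes S :: "nat set"
  assumes "numerical_semigroup S" and "free_semigroup S" and "reflective S"
  shows "\<exists>A. telescopic_set A \<and> minimal_generating_set A S \<and>
     ((A = {1} \<and> genus S = 0)
      \<or> (\<exists>n::nat. A = {2, 4*n+3} \<and> genus S = 2*n+1)
      \<or> (\<exists>n::nat. A = {3, 3*n+2} \<and> genus S = 3*n+1)
      \<or> (\<exists>n::nat. A = {4, 4*n+2, 4*n+3} \<and> genus S = 4*n+1))"
proof (cases "S = UNIV")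
  case True
  then show ?thesis using telescopic_set_singleton minimal_generating_set_one
    by (intro exI[of _ "{1}"]) (simp add: genus_def)
next
  case False
  with assms obtain d a where "free_reflective_numerical_semigroup S (genus S) d a"
    by (rule free_reflective_numerical_semigroup_exists)
  then interpret free_reflective_numerical_semigroup S "genus S" d a .
  from eq_gen_family show ?thesis
  proof (elim disjE exE conjE)
    fix n assume "S = gen {2, 4 * n + 3}" "genus S = 2 * n + 1"
    then show ?thesis using telescopic_minimal_family_2[of n] by blast
  next
    fix n assume "1 \<le> n" "S = gen {3, 3 * n + 2}" "genus S = 3 * n + 1"
    then show ?thesis using telescopic_minimal_family_3[of n] by blast
  next
    fix n assume "1 \<le> n" "S = gen {4, 4 * n + 2, 4 * n + 3}" "genus S = 4 * n + 1"
    then show ?thesis using telescopic_minimal_family_4[of n] by blast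
  qed
qed

end
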